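(* Let $\{\gamma_k\}$ be strictly positive numbers with $\gamma_k\to\infty$, $\{g_k\}$ probability generating functions, $G_k(z)=k\gamma_k[g_k(e^{-z/k})-e^{-z/k}]$ for $z\ge0$, and $$v_k(t,\lambda)=-k\log g_k^{[\gamma_kt]}(e^{-\lambda/k}),\qquad t,\lambda\ge0,$$ where $g_k^n$ is the $n$-fold iterate of $g_k$ ($g_k^0(z)=z$) and $[\cdot]$ is the integer part. If $\{G_k\}$ is uniformly Lipschitz on $[0,1]$, then there are constants $B,N\ge0$ such that $v_k(t,\lambda)\le\lambda e^{Bt}$ for all $t,\lambda\ge0$ and all $k\ge N$. *)

theory Defs
  imports "HOL-Analysis.Analysis"
begin

definition prob_dist :: "(nat \<Rightarrow> real) \<Rightarrow> bool" where
  "prob_dist p \<longleftrightarrow> (\<forall>n. p n \<ge> 0) \<and> p sums 1"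

definition pgf :: "(nat \<Rightarrow> real) \<Rightarrow> real \<Rightarrow> real" where
  "pgf p s = (\<Sum>n. p n * s ^ n)"

end

theory Submission
  imports Defs
begin

text \<open>
  Let B = L e^2 and c = B / gamma_k. As G_k(0) = 0, the Lipschitz bound gives
  g_k(e^(-y/k)) >= e^(-y/k) - L y / (k gamma_k) for y in [0,1]; since exp has derivative at
  least e^(-2) on [-2,0], this yields g_k(s) >= s^(1+c) on [e^(-1/k), 1] as soon as
  gamma_k >= B. Jensen's inequality g(s)^a <= g(s^a) for a >= 1 carries the bound over to
  all s in (0,1]. Iterating, g_k^n(s) >= s^((1+c)^n), hence
  v_k(t,lam) <= lam (1+c)^n <= lam e^(c n) <= lam e^(B t) for n = [gamma_k t].
\<close>

lemma summable_pgf: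
  assumes "prob_dist p" "0 \<le> s" "s \<le> 1"
  shows "summable (\<lambda>n. p n * s ^ n)"
proof (rule summable_comparison_test[where g = p])
  show "summable p" using assms(1) unfolding prob_dist_def by (auto simp: sums_iff)
  show "\<exists>N. \<forall>n\<ge>N. norm (p n * s ^ n) \<le> p n"
    using assms by (auto simp: prob_dist_def abs_mult intro!: mult_left_le power_le_one)
qed

lemma pgf_sums:
  assumes "prob_dist p" "0 \<le> s" "s \<le> 1"
  shows "(\<lambda>n. p n * s ^ n) sums pgf p s"
  using summable_pgf[OF assms] unfolding pgf_def by (simp add: summable_sums)

lemma pgf_le_one:
  assumes "prob_dist p" "0 \<le> s" "s \<le> 1"
  shows "pgf p s \<le> 1"
proof -
  have "pgf p s \<le> suminf p"
    unfolding pgf_def using assms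
    by (intro suminf_le summable_pgf)
       (auto simp: prob_dist_def sums_iff intro!: mult_left_le power_le_one)
  also have "suminf p = 1" using assms(1) by (auto simp: prob_dist_def sums_iff)
  finally show ?thesis .
qed

lemma pgf_one:
  assumes "prob_dist p"
  shows "pgf p 1 = 1"
  using assms by (auto simp: prob_dist_def pgf_def sums_iff)

lemma pgf_pos:
  assumes "prob_dist p" "0 < s" "s \<le> 1"
  shows "0 < pgf p s"
proof -
  have "p \<noteq> (\<lambda>_. 0)"
    using assms(1) by (auto simp: prob_dist_def sums_iff)
  then obtain i where "p i \<noteq> 0" by auto
  with assms(1) have "p i > 0" by (simp add: prob_dist_def order_le_neq_trans)
  then show ?thesis unfolding pgf_def
    by (intro suminf_pos2[where i=i]) (use assms summable_pgf in \<open>auto simp: prob_dist_def\<close>)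
qed

text \<open>Jensen's inequality for u \<mapsto> u^a, proved termwise by Young's inequality with
  exponents 1/a and 1 - 1/a.\<close>
lemma powr_pgf_le_pgf_powr:
  assumes pd: "prob_dist p" and s: "0 < s" "s \<le> 1" and a: "1 \<le> a"
  shows "pgf p s powr a \<le> pgf p (s powr a)"
proof -
  define b where "b = 1 / a"
  have b: "0 < b" "b \<le> 1" "a * b = 1" using a by (auto simp: b_def)
  have sa: "0 < s powr a" "s powr a \<le> 1" using s a by (auto intro: powr_le1)
  define M where "M = pgf p (s powr a)"
  have M: "0 < M" using pgf_pos[OF pd sa] by (simp add: M_def)
  have young: "s ^ n * M powr (1 - b) \<le> b * (s powr a) ^ n + (1 - b) * M" for n
  proof -
    have "((s powr a) ^ n) powr b = s powr (a * b * n)"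
      using s by (simp add: powr_realpow[symmetric] powr_powr mult_ac)
    also have "\<dots> = s ^ n"
      using s b by (simp add: powr_realpow)
    finally have "((s powr a) ^ n) powr b = s ^ n" .
    then show ?thesis
      using Youngs_inequality_0[of b "1 - b" "(s powr a) ^ n" M] b sa M by simp
  qed
  have "(\<lambda>n. b * (p n * (s powr a) ^ n) + (1 - b) * M * p n) sums (b * M + (1 - b) * M * 1)"
    using pgf_sums[OF pd less_imp_le[OF sa(1)] sa(2)] pd
    by (intro sums_add sums_mult) (auto simp: M_def prob_dist_def)
  then have rhs: "(\<lambda>n. p n * (b * (s powr a) ^ n + (1 - b) * M)) sums M"
    by (simp add: algebra_simps)
  have lhs: "(\<lambda>n. p n * s ^ n * M powr (1 - b)) sums (pgf p s * M powr (1 - b))"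
    using sums_mult2[OF pgf_sums[OF pd]] s by auto
  have "pgf p s * M powr (1 - b) \<le> M"
    using pd young by (intro sums_le[OF _ lhs rhs]) (simp add: prob_dist_def mult.assoc mult_left_mono)
  then have "pgf p s \<le> M powr b"
    using M by (simp add: powr_diff field_simps)
  then have "pgf p s powr a \<le> (M powr b) powr a"
    using pgf_pos[OF pd s] a by (intro powr_mono2) auto
  also have "\<dots> = M" using M b by (simp add: powr_powr mult.commute)
  finally show ?thesis by (simp add: M_def)
qed

text \<open>Every x < s0 is s0^a with a \<ge> 1, so Jensen's inequality applies.\<close>
lemma pgf_ge_powr_extend:
  assumes pd: "prob_dist p" and s0: "0 < s0" "s0 < 1" and r: "0 \<le> r"
    and near: "\<And>s. s0 \<le> s \<Longrightarrow> s \<le> 1 \<Longrightarrow> s powr r \<le> pgf p s"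
    and x: "0 < x" "x \<le> 1"
  shows "x powr r \<le> pgf p x"
proof (cases "s0 \<le> x")
  case True
  then show ?thesis using near x by blast
next
  case False
  define a where "a = ln x / ln s0"
  have "ln x \<le> ln s0" using False x s0 by simp
  moreover have "ln s0 < 0" using s0 by simp
  ultimately have a: "1 \<le> a" by (simp add: a_def)
  have xa: "x = s0 powr a" using s0 x by (simp add: powr_def a_def)
  have "x powr r = (s0 powr r) powr a"
    by (simp add: xa powr_powr mult.commute)
  also have "\<dots> \<le> pgf p s0 powr a"
    using near[of s0] s0 a by (intro powr_mono2) auto
  also have "\<dots> \<le> pgf p (s0 powr a)"
    using powr_pgf_le_pgf_powr[OF pd s0(1) _ a] s0(2) by simp
  finally show ?thesis by (simp add: xa)
qed

lemma exp_diff_ge: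
  fixes a b :: real
  assumes "0 \<le> a" "0 \<le> b" "a + b \<le> 2"
  shows "exp (- 2) * b \<le> exp (- a) - exp (- (a + b))"
proof -
  have "exp (- a) - exp (- (a + b)) = exp (- (a + b)) * (exp b - 1)"
    by (simp add: algebra_simps flip: exp_add)
  also have "exp (- 2) * b \<le> \<dots>"
  proof (rule mult_mono)
    show "b \<le> exp b - 1" using exp_ge_add_one_self[of b] by linarith
  qed (use assms in auto)
  finally show ?thesis .
qed

lemma pgf_ge_powr_near_one:
  assumes k: "1 \<le> k" and c: "0 \<le> c" "c \<le> 1"
    and lower: "\<And>y. 0 \<le> y \<Longrightarrow> y \<le> 1 \<Longrightarrow>
                  exp (- y / k) - exp (- 2) * c * y / k \<le> pgf p (exp (- y / k))"
    and s: "exp (- 1 / k) \<le> s" "s \<le> 1"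
  shows "s powr (1 + c) \<le> pgf p s"
proof -
  define y where "y = - k * ln s"
  have s0: "0 < s" using s(1) by (rule order.strict_trans2[rotated]) simp
  have "- 1 / k \<le> ln s" using ln_mono[OF s(1)] by simp
  then have y: "0 \<le> y" "y \<le> 1" "s = exp (- y / k)"
    using s s0 k by (auto simp: y_def field_simps mult_le_0_iff)
  have "(1 + c) * y \<le> 2 * k" using c y k by (intro mult_mono) auto
  then have "exp (- 2) * (c * y / k) \<le> exp (- (y / k)) - exp (- (y / k + c * y / k))"
    using c y k by (intro exp_diff_ge) (auto simp: field_simps)
  then have "exp (- ((1 + c) * y / k)) \<le> pgf p (exp (- y / k))"
    using lower[OF y(1,2)] by (simp add: algebra_simps add_divide_distrib)
  then show ?thesis
    using y(3) s0 k by (simp add: powr_def algebra_simps)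
qed

lemma powr_funpow_le:
  fixes f :: "real \<Rightarrow> real"
  assumes f: "\<And>x. 0 < x \<Longrightarrow> x \<le> 1 \<Longrightarrow> x powr r \<le> f x \<and> f x \<le> 1"
    and r: "0 \<le> r" and x: "0 < x" "x \<le> 1"
  shows "x powr (r ^ n) \<le> (f ^^ n) x"
  using x
proof (induction n arbitrary: x)
  case 0
  then show ?case by simp
next
  case (Suc n)
  have fx: "x powr r \<le> f x" "0 < f x" "f x \<le> 1"
  proof -
    have "0 < x powr r" using Suc.prems by simp
    with f[OF Suc.prems] show "x powr r \<le> f x" "0 < f x" "f x \<le> 1"
      by linarith+
  qed
  have "x powr (r ^ Suc n) = (x powr r) powr (r ^ n)"
    by (simp add: powr_powr mult.commute)
  also have "\<dots> \<le> f x powr (r ^ n)"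
    using fx r by (intro powr_mono2) auto
  also have "\<dots> \<le> (f ^^ n) (f x)"
    using Suc.IH fx by simp
  finally show ?case by (simp only: funpow_Suc_right comp_def)
qed

lemma neg_ln_funpow_le:
  fixes f :: "real \<Rightarrow> real"
  assumes f: "\<And>x. 0 < x \<Longrightarrow> x \<le> 1 \<Longrightarrow> x powr (1 + c) \<le> f x \<and> f x \<le> 1"
    and c: "0 \<le> c" and k: "0 < k" and lam: "0 \<le> lam"
  shows "- k * ln ((f ^^ n) (exp (- lam / k))) \<le> lam * exp (c * n)"
proof -
  define x where "x = exp (- lam / k)"
  have x: "0 < x" "x \<le> 1" using lam k by (auto simp: x_def)
  have "x powr ((1 + c) ^ n) \<le> (f ^^ n) x"
    using powr_funpow_le[OF f _ x] c by simp
  then have "ln (x powr ((1 + c) ^ n)) \<le> ln ((f ^^ n) x)"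
    using x by (intro ln_mono) auto
  then have "- k * ln ((f ^^ n) x) \<le> (1 + c) ^ n * lam"
    using x k by (simp add: x_def field_simps)
  also have "(1 + c) ^ n \<le> exp c ^ n"
    using c by (intro power_mono) (auto simp: add.commute)
  finally show ?thesis
    using lam by (simp add: x_def mult.commute exp_of_nat_mult[symmetric] mult_right_mono)
qed

lemma pgf_ge_powr_of_lipschitz:
  assumes pd: "prob_dist p" and k: "1 \<le> k" and gam: "L * exp 2 \<le> gam" "0 < gam"
    and lip: "L-lipschitz_on {0..1} (\<lambda>z. k * gam * (pgf p (exp (- z / k)) - exp (- z / k)))"
    and x: "0 < x" "x \<le> 1"
  shows "x powr (1 + L * exp 2 / gam) \<le> pgf p x"
proof -
  define c where "c = L * exp 2 / gam"
  have c: "0 \<le> c" "c \<le> 1" using lipschitz_on_nonneg[OF lip] gam by (auto simp: c_def)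
  have lower: "exp (- y / k) - exp (- 2) * c * y / k \<le> pgf p (exp (- y / k))"
    if y: "0 \<le> y" "y \<le> 1" for y
  proof -
    have "\<bar>k * gam * (pgf p (exp (- y / k)) - exp (- y / k))\<bar> \<le> L * y"
      using lipschitz_onD[OF lip, of y 0] y pgf_one[OF pd] by (simp add: dist_real_def)
    then show ?thesis
      using k gam by (simp add: c_def exp_minus field_simps abs_le_iff)
  qed
  show ?thesis
    unfolding c_def[symmetric]
    by (rule pgf_ge_powr_extend[OF pd, of "exp (- 1 / k)"])
       (use k c x pgf_ge_powr_near_one[OF k c lower] in auto)
qed

theorem lemma2p1p5:
  fixes \<gamma> :: "nat \<Rightarrow> real" and p :: "nat \<Rightarrow> nat \<Rightarrow> real"
    and g :: "nat \<Rightarrow> real \<Rightarrow> real" and G :: "nat \<Rightarrow> real \<Rightarrow> real"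
    and v :: "nat \<Rightarrow> real \<Rightarrow> real \<Rightarrow> real"
  assumes gamma_pos: "\<And>k. \<gamma> k > 0"
    and gamma_lim: "filterlim \<gamma> at_top sequentially"
    and p_dist: "\<And>k. prob_dist (p k)"
    and g_def: "\<And>k. g k = pgf (p k)"
    and G_def: "\<And>k z. G k z = real k * \<gamma> k * (g k (exp (- z / real k)) - exp (- z / real k))"
    and v_def: "\<And>k t lam. v k t lam = - real k * ln ((g k ^^ nat \<lfloor>\<gamma> k * t\<rfloor>) (exp (- lam / real k)))"
    and unif_lip: "\<exists>L. \<forall>k. L-lipschitz_on {0..1} (G k)"
  shows "\<exists>B N. B \<ge> 0 \<and> N \<ge> 0 \<and>
           (\<forall>k\<ge>N. \<forall>t\<ge>0. \<forall>lam\<ge>0. v k t lam \<le> lam * exp (B * t))"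
proof -
  obtain L where lip: "\<And>k. L-lipschitz_on {0..1} (G k)" using unif_lip by blast
  define B where "B = L * exp 2"
  have B: "0 \<le> B" using lipschitz_on_nonneg[OF lip] by (simp add: B_def)
  obtain N0 where N0: "\<And>k. k \<ge> N0 \<Longrightarrow> B \<le> \<gamma> k"
    using gamma_lim by (auto simp: filterlim_at_top eventually_sequentially)
  have "v k t lam \<le> lam * exp (B * t)" if k: "k \<ge> max N0 1" and t: "0 \<le> t" and lam: "0 \<le> lam"
    for k t lam
  proof -
    define c where "c = B / \<gamma> k"
    have k1: "1 \<le> real k" and c: "0 \<le> c" and \<gamma>: "0 < \<gamma> k" "B \<le> \<gamma> k"
      using k B N0[of k] gamma_pos[of k] by (auto simp: c_def)
    have "G k = (\<lambda>z. real k * \<gamma> k * (pgf (p k) (exp (- z / k)) - exp (- z / k)))"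
      by (simp add: fun_eq_iff G_def g_def)
    then have "x powr (1 + c) \<le> g k x \<and> g k x \<le> 1" if "0 < x" "x \<le> 1" for x
      using pgf_ge_powr_of_lipschitz[OF p_dist k1 _ \<gamma>(1) _ that] lip[of k] \<gamma>
        pgf_le_one[OF p_dist] that by (simp add: g_def c_def B_def)
    then have "v k t lam \<le> lam * exp (c * nat \<lfloor>\<gamma> k * t\<rfloor>)"
      unfolding v_def using neg_ln_funpow_le c k1 lam by simp
    also have "c * nat \<lfloor>\<gamma> k * t\<rfloor> \<le> c * (\<gamma> k * t)"
      using c t \<gamma> by (intro mult_left_mono) auto
    also have "\<dots> = B * t" using \<gamma> by (simp add: c_def)
    finally show ?thesis using lam by (simp add: mult_left_mono)
  qed
  then show ?thesis using B by blast
qed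

end
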